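(* Let $K$ be the field of fractions of a complete discrete valuation ring $\mathcal{O}$ with maximal ideal $\mathfrak{p}$ such that the residue field $\mathcal{O}/\mathfrak{p}$ is finite. In the coefficient-choosing game of degree $d = 3$ over $K$, whichever player makes the last move has a winning strategy.
   Context: The coefficient-choosing game of degree $d$ over $K$: Nora and Wanda alternately choose coefficients of $f(x) = a_d x^d + \cdots + a_0$; on each move the current player picks a not-yet-chosen coefficient and assigns it a value in $K$, subject to $a_d \neq 0$, $a_0 \neq 0$. After all $d+1$ coefficients are chosen, Wanda wins if $f$ has a root in $K$, and Nora wins otherwise. Who moves first is fixed in advance. *)

theory Defs
  imports "HOL-Computational_Algebra.Polynomial"
begin

text \<open>A (normalized) discrete valuation on a field K, given on nonzero elements.
  Its valuation ring O = {x. v x >= 0} together with 0 is a DVR with fraction field K,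
  and every DVR O with fraction field K arises this way.\<close>

definition discrete_valuation :: "('a::field \<Rightarrow> int) \<Rightarrow> bool" where
  "discrete_valuation v \<longleftrightarrow>
     (\<forall>x y. x \<noteq> 0 \<and> y \<noteq> 0 \<longrightarrow> v (x * y) = v x + v y) \<and>
     (\<forall>x y. x \<noteq> 0 \<and> y \<noteq> 0 \<and> x + y \<noteq> 0 \<longrightarrow> min (v x) (v y) \<le> v (x + y)) \<and>
     (\<exists>\<pi>. \<pi> \<noteq> 0 \<and> v \<pi> = 1)"

definition val_ring :: "('a::field \<Rightarrow> int) \<Rightarrow> 'a set" where
  "val_ring v = {x. x = 0 \<or> 0 \<le> v x}"

definition in_max_pow :: "('a::field \<Rightarrow> int) \<Rightarrow> nat \<Rightarrow> 'a \<Rightarrow> bool" where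
  "in_max_pow v N x \<longleftrightarrow> x = 0 \<or> int N \<le> v x"

definition max_ideal :: "('a::field \<Rightarrow> int) \<Rightarrow> 'a set" where
  "max_ideal v = {x. in_max_pow v 1 x}"

definition residue_classes :: "('a::field \<Rightarrow> int) \<Rightarrow> 'a set set" where
  "residue_classes v = val_ring v //
     {(x, y). x \<in> val_ring v \<and> y \<in> val_ring v \<and> x - y \<in> max_ideal v}"

definition complete_val_ring :: "('a::field \<Rightarrow> int) \<Rightarrow> bool" where
  "complete_val_ring v \<longleftrightarrow>
     (\<forall>s :: nat \<Rightarrow> 'a. (\<forall>n. s n \<in> val_ring v) \<and>
        (\<forall>N. \<exists>M. \<forall>m\<ge>M. \<forall>n\<ge>M. in_max_pow v N (s m - s n)) \<longrightarrow>
        (\<exists>L\<in>val_ring v. \<forall>N. \<exists>M. \<forall>n\<ge>M. in_max_pow v N (s n - L)))"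

definition nonarch_local_field :: "('a::field \<Rightarrow> int) \<Rightarrow> bool" where
  "nonarch_local_field v \<longleftrightarrow>
     discrete_valuation v \<and> complete_val_ring v \<and> finite (residue_classes v)"

datatype player = Nora | Wanda

fun other :: "player \<Rightarrow> player" where
  "other Nora = Wanda" | "other Wanda = Nora"

text \<open>A position: a partial assignment of the coefficients a_0..a_d (None = not yet chosen).\<close>
definition legal_move :: "nat \<Rightarrow> (nat \<Rightarrow> 'a::field option) \<Rightarrow> nat \<Rightarrow> 'a \<Rightarrow> bool" where
  "legal_move d a i c \<longleftrightarrow> i \<le> d \<and> a i = None \<and> (i = d \<longrightarrow> c \<noteq> 0) \<and> (i = 0 \<longrightarrow> c \<noteq> 0)"

definition game_poly :: "nat \<Rightarrow> (nat \<Rightarrow> 'a::field option) \<Rightarrow> 'a poly" where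
  "game_poly d a = (\<Sum>i\<le>d. monom (the (a i)) i)"

definition has_root :: "'a::field poly \<Rightarrow> bool" where
  "has_root f \<longleftrightarrow> (\<exists>x. poly f x = 0)"

text \<open>wins p d n a m: player p can force a win from position a, with n moves remaining
  and player m to move.\<close>
fun wins :: "player \<Rightarrow> nat \<Rightarrow> nat \<Rightarrow> (nat \<Rightarrow> 'a::field option) \<Rightarrow> player \<Rightarrow> bool" where
  "wins p d 0 a m = (if p = Wanda then has_root (game_poly d a) else \<not> has_root (game_poly d a))"
| "wins p d (Suc n) a m =
     (if m = p then (\<exists>i c. legal_move d a i c \<and> wins p d n (a(i := Some c)) (other m))
      else (\<forall>i c. legal_move d a i c \<longrightarrow> wins p d n (a(i := Some c)) (other m)))"

definition has_winning_strategy :: "'a::field itself \<Rightarrow> nat \<Rightarrow> player \<Rightarrow> player \<Rightarrow> bool" where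
  "has_winning_strategy K d first p \<longleftrightarrow> wins p d (Suc d) (\<lambda>_. None :: 'a option) first"

definition last_mover :: "nat \<Rightarrow> player \<Rightarrow> player" where
  "last_mover d first = (if odd (Suc d) then first else other first)"

end

theory Submission
  imports Defs
begin

(* Wanda, moving last, wins over every infinite field: if her final coefficient is a middle one
   she makes 1 a root; if it is an end one she picks any x \<noteq> 0 that is not a root of the rest of
   the polynomial and solves for the coefficient.

   Nora, moving last, answers Wanda's opening by a_1 := 0 (or a_2 := 0 if Wanda opened with a_1).
   Her final move is then an end coefficient, or a_2 with a_1 = 0. An end coefficient of extreme
   valuation makes one term dominate for every x (for a_3 after x \<mapsto> 1/x). For
   a_0 + a_2 x^2 + a_3 x^3, if 3 does not divide v a_3 - v a_0 there is no root already for a_2 = 0;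
   otherwise scale to w y^3 + e y^2 + 1 with v w = 0. Its roots are units, where e = -(w y + y^-2)
   depends only on the residue class of y; the units meet fewer residue classes than there are,
   so e can be taken from a class no root can reach. *)

section \<open>Game positions\<close>

definition open_slots :: "nat \<Rightarrow> (nat \<Rightarrow> 'a option) \<Rightarrow> nat set" where
  "open_slots d a = {i. i \<le> d \<and> a i = None}"

definition admissible :: "nat \<Rightarrow> (nat \<Rightarrow> 'a::zero option) \<Rightarrow> bool" where
  "admissible d a \<longleftrightarrow> a 0 \<noteq> Some 0 \<and> a d \<noteq> Some 0"

lemma open_slots_empty: "open_slots d (\<lambda>_. None) = {..d}"
  by (auto simp: open_slots_def)

lemma open_slots_update: "open_slots d (a(i := Some c)) = open_slots d a - {i}"
  by (auto simp: open_slots_def)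

lemma legal_move_iff: "legal_move d a i c \<longleftrightarrow> i \<in> open_slots d a \<and> (i = 0 \<or> i = d \<longrightarrow> c \<noteq> 0)"
  by (auto simp: legal_move_def open_slots_def)

lemma card_open_slots_move:
  "legal_move d a i c \<Longrightarrow> card (open_slots d (a(i := Some c))) = card (open_slots d a) - 1"
  by (simp add: open_slots_update legal_move_iff)

lemma admissible_update: "admissible d a \<Longrightarrow> legal_move d a i c \<Longrightarrow> admissible d (a(i := Some c))"
  by (auto simp: admissible_def legal_move_def)

lemma filled_slot: "i \<le> d \<Longrightarrow> i \<notin> open_slots d a \<Longrightarrow> a i = Some (the (a i))"
  by (auto simp: open_slots_def)

lemma coeff_game_poly: "coeff (game_poly d a) i = (if i \<le> d then the (a i) else 0)"
  by (simp add: game_poly_def coeff_sum)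

lemma game_poly_update:
  assumes "j \<le> d"
  shows "game_poly d (a(j := Some c)) = monom c j + game_poly d (a(j := Some 0))"
  by (rule poly_eqI) (use assms in \<open>auto simp: coeff_game_poly\<close>)

lemma poly_game_poly_cubic:
  "poly (game_poly 3 a) x = the (a 0) + the (a 1) * x + the (a 2) * x^2 + the (a 3) * x^3"
  by (simp add: game_poly_def poly_sum poly_monom numeral_3_eq_3 atMost_Suc algebra_simps
      power2_eq_square power3_eq_cube Suc_1[symmetric])

lemma wins_by_move:
  "n = Suc n' \<Longrightarrow> legal_move d a i c \<Longrightarrow> wins p d n' (a(i := Some c)) (other p) \<Longrightarrow> wins p d n a p"
  by auto

lemma wins_against_all_moves:
  "n = Suc n' \<Longrightarrow> m \<noteq> p \<Longrightarrow> (\<And>i c. legal_move d a i c \<Longrightarrow> wins p d n' (a(i := Some c)) (other m))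
    \<Longrightarrow> wins p d n a m"
  by auto

lemma last_mover_wins:
  fixes a :: "nat \<Rightarrow> 'a::field option"
  assumes final: "\<And>a' j. open_slots d a' = {j} \<Longrightarrow> admissible d a' \<Longrightarrow> wins p d 1 (a' :: nat \<Rightarrow> 'a option) p"
    and "card (open_slots d a) = Suc n" and "admissible d a"
    and "m = (if even n then p else other p)"
  shows "wins p d (Suc n) a m"
  using assms(2-)
proof (induction n arbitrary: a m)
  case 0
  then obtain j where "open_slots d a = {j}" by (auto simp: card_Suc_eq)
  from final[OF this 0(2)] 0(3) show ?case by (simp del: wins.simps)
next
  case (Suc n)
  have step: "wins p d (Suc n) (a(i := Some c)) (other m)" if "legal_move d a i c" for i c
  proof (rule Suc.IH)
    show "card (open_slots d (a(i := Some c))) = Suc n"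
      using that Suc.prems(1) by (simp add: card_open_slots_move)
    show "admissible d (a(i := Some c))" using Suc.prems(2) that by (rule admissible_update)
    show "other m = (if even n then p else other p)"
      using Suc.prems(3) by (cases p) auto
  qed
  show ?case
  proof (cases "m = p")
    case True
    obtain i where "i \<in> open_slots d a" using Suc.prems(1) by fastforce
    then have move: "legal_move d a i 1" by (simp add: legal_move_iff)
    show ?thesis unfolding True by (rule wins_by_move[OF refl move step[OF move, unfolded True]])
  next
    case False
    show ?thesis by (rule wins_against_all_moves[OF refl False step])
  qed
qed

lemma last_mover_has_winning_strategy:
  assumes "\<And>a j. open_slots d a = {j} \<Longrightarrow> admissible d a \<Longrightarrow> wins p d 1 (a :: nat \<Rightarrow> 'a::field option) p"
    and "last_mover d first = p"
  shows "has_winning_strategy TYPE('a) d first p"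
  unfolding has_winning_strategy_def
proof (rule last_mover_wins[OF assms(1)])
  show "card (open_slots d (\<lambda>_. None :: 'a option)) = Suc d" by (simp add: open_slots_empty)
  show "first = (if even d then p else other p)"
    using assms(2) by (cases first) (auto simp: last_mover_def)
  show "admissible d (\<lambda>_. None :: 'a option)" by (simp add: admissible_def)
qed

lemma wanda_wins_final_move:
  assumes "infinite (UNIV :: 'a::field set)" and "0 < d"
    and open_j: "open_slots d a = {j}" and "admissible d (a :: nat \<Rightarrow> 'a option)"
  shows "wins Wanda d 1 a Wanda"
proof -
  define g where "g = game_poly d (a(j := Some 0))"
  have j: "j \<le> d" using open_j by (auto simp: open_slots_def)
  have filled_nonzero: "the (a i) \<noteq> 0" if "i = 0 \<or> i = d" "i \<noteq> j" for i
  proof -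
    have "a i = Some (the (a i))" using filled_slot[of i d a] open_j that by auto
    then show ?thesis using assms(4) that by (auto simp: admissible_def)
  qed
  \<comment> \<open>at least one end coefficient of g is already chosen\<close>
  have "coeff g 0 \<noteq> 0 \<or> coeff g d \<noteq> 0"
  proof (cases "j = 0")
    case True
    then show ?thesis using filled_nonzero[of d] \<open>0 < d\<close> by (simp add: g_def coeff_game_poly)
  next
    case False
    then show ?thesis using filled_nonzero[of 0] by (simp add: g_def coeff_game_poly)
  qed
  then have "g \<noteq> 0" by auto
  then have "finite ({x. poly g x = 0} \<union> {0})" by (simp add: poly_roots_finite)
  then obtain x where x: "x \<noteq> 0" "poly g x \<noteq> 0" using ex_new_if_finite[OF assms(1)] by blast
  define c where "c = - poly g x / x ^ j"
  have "legal_move d a j c" using open_j x by (simp add: legal_move_iff c_def)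
  moreover have "poly (game_poly d (a(j := Some c))) x = 0"
    unfolding game_poly_update[OF j, of a c] g_def[symmetric] using x by (simp add: poly_monom c_def)
  ultimately show ?thesis by (auto simp: has_root_def)
qed

section \<open>Discretely valued fields\<close>

lemma cubic_no_root_if_reversal_has_none:
  fixes a0 :: "'a::field"
  assumes "a0 \<noteq> 0" and "\<forall>y. a3 + a2*y + a1*y^2 + a0*y^3 \<noteq> 0"
  shows "a0 + a1*x + a2*x^2 + a3*x^3 \<noteq> 0"
proof
  assume root: "a0 + a1*x + a2*x^2 + a3*x^3 = 0"
  then have "x \<noteq> 0" using assms(1) by auto
  then have "a3 + a2*inverse x + a1*(inverse x)^2 + a0*(inverse x)^3
      = (a0 + a1*x + a2*x^2 + a3*x^3) * (inverse x)^3"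
    by (simp add: field_simps power2_eq_square power3_eq_cube)
  with root assms(2) show False by simp
qed

lemma card_image_le_if_factors:
  assumes "finite (g ` A)" and "\<And>x y. x \<in> A \<Longrightarrow> y \<in> A \<Longrightarrow> g x = g y \<Longrightarrow> f x = f y"
  shows "card (f ` A) \<le> card (g ` A)"
proof -
  have "f (inv_into A g (g x)) = f x" if "x \<in> A" for x
    using assms(2) inv_into_into[of "g x" g A] f_inv_into_f[of "g x" g A] that by blast
  then have "f ` A = (f \<circ> inv_into A g) ` g ` A"
    by (simp add: image_image cong: image_cong)
  then show ?thesis using assms(1) card_image_le by metis
qed

locale discretely_valued_field =
  fixes v :: "'a::field \<Rightarrow> int"
  assumes discrete_valuation: "discrete_valuation v"
begin

lemma val_mult: "x \<noteq> 0 \<Longrightarrow> y \<noteq> 0 \<Longrightarrow> v (x * y) = v x + v y"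
  using discrete_valuation by (simp add: discrete_valuation_def)

lemma val_add: "x \<noteq> 0 \<Longrightarrow> y \<noteq> 0 \<Longrightarrow> x + y \<noteq> 0 \<Longrightarrow> min (v x) (v y) \<le> v (x + y)"
  using discrete_valuation by (simp add: discrete_valuation_def)

lemma val_one [simp]: "v 1 = 0"
  using val_mult[of 1 1] by simp

lemma val_minus: "v (- x) = v x"
proof (cases "x = 0")
  case False
  have "v (-1) = 0" using val_mult[of "-1" "-1"] by simp
  with False show ?thesis using val_mult[of "-1" x] by simp
qed simp

lemma val_inverse: "x \<noteq> 0 \<Longrightarrow> v (inverse x) = - v x"
  using val_mult[of x "inverse x"] by simp

lemma val_power: "x \<noteq> 0 \<Longrightarrow> v (x ^ n) = int n * v x"
  by (induction n) (auto simp: val_mult algebra_simps)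

lemma val_divide: "x \<noteq> 0 \<Longrightarrow> y \<noteq> 0 \<Longrightarrow> v (x / y) = v x - v y"
  by (simp add: divide_inverse val_mult val_inverse)

lemma exists_val_eq: "\<exists>t. t \<noteq> 0 \<and> v t = m"
proof -
  obtain \<pi> where \<pi>: "\<pi> \<noteq> 0" "v \<pi> = 1"
    using discrete_valuation by (auto simp: discrete_valuation_def)
  show ?thesis
  proof (cases "0 \<le> m")
    case True
    with \<pi> show ?thesis by (intro exI[of _ "\<pi> ^ nat m"]) (simp add: val_power)
  next
    case False
    with \<pi> show ?thesis by (intro exI[of _ "inverse \<pi> ^ nat (- m)"]) (simp add: val_power val_inverse)
  qed
qed

lemma infinite_UNIV_field: "infinite (UNIV :: 'a set)"
proof
  assume "finite (UNIV :: 'a set)"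
  obtain \<pi> :: 'a where \<pi>: "\<pi> \<noteq> 0" "v \<pi> = 1" using exists_val_eq by blast
  have "inj (\<lambda>n::nat. \<pi> ^ n)"
  proof (rule injI)
    fix m n :: nat
    assume "\<pi> ^ m = \<pi> ^ n"
    then have "v (\<pi> ^ m) = v (\<pi> ^ n)" by simp
    with \<pi> show "m = n" by (simp add: val_power)
  qed
  with \<open>finite UNIV\<close> show False
    using finite_imageD[of "\<lambda>n::nat. \<pi> ^ n" UNIV] finite_subset[of "range (\<lambda>n::nat. \<pi> ^ n)"] by auto
qed

definition val_ge :: "int \<Rightarrow> 'a \<Rightarrow> bool" where
  "val_ge m x \<longleftrightarrow> x = 0 \<or> m \<le> v x"

lemma val_ge_val: "val_ge (v x) x"
  by (simp add: val_ge_def)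

lemma val_ge_zero [simp]: "val_ge m 0"
  by (simp add: val_ge_def)

lemma val_ge_add: "val_ge m x \<Longrightarrow> val_ge m y \<Longrightarrow> val_ge m (x + y)"
  unfolding val_ge_def using val_add[of x y] by fastforce

lemma val_ge_minus: "val_ge m (- x) \<longleftrightarrow> val_ge m x"
  by (simp add: val_ge_def val_minus)

lemma val_ge_mult: "val_ge k x \<Longrightarrow> val_ge l y \<Longrightarrow> m \<le> k + l \<Longrightarrow> val_ge m (x * y)"
  by (cases "x = 0"; cases "y = 0") (auto simp: val_ge_def val_mult)

lemma val_ge_monomial: "val_ge k a \<Longrightarrow> x \<noteq> 0 \<Longrightarrow> m \<le> k + int n * v x \<Longrightarrow> val_ge m (a * x ^ n)"
  by (cases "a = 0") (auto simp: val_ge_def val_mult val_power)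

lemma dominant_term_nonzero:
  assumes "t \<noteq> 0" and "val_ge (v t + 1) s1" "val_ge (v t + 1) s2" "val_ge (v t + 1) s3"
  shows "t + s1 + s2 + s3 \<noteq> 0"
proof
  assume "t + s1 + s2 + s3 = 0"
  then have "- t = s1 + s2 + s3" by (simp add: add.assoc add_eq_0_iff)
  moreover have "val_ge (v t + 1) (s1 + s2 + s3)" using assms(2-) by (intro val_ge_add)
  ultimately show False using assms(1) val_minus[of t] by (auto simp: val_ge_def)
qed

lemma exists_const_coeff_without_roots:
  fixes a1 a2 a3 :: 'a
  assumes a3: "a3 \<noteq> 0"
  shows "\<exists>a0. a0 \<noteq> 0 \<and> (\<forall>x. a0 + a1*x + a2*x^2 + a3*x^3 \<noteq> 0)"
proof -
  define N where "N = \<bar>v a1\<bar> + \<bar>v a2\<bar> + \<bar>v a3\<bar> + 1"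
  have N: "\<bar>v a1 - v a3\<bar> < N" "\<bar>v a2 - v a3\<bar> < N" "0 < N" unfolding N_def by linarith+
  obtain a0 where a0: "a0 \<noteq> 0" "v a0 = v a3 - 3 * N - 1" using exists_val_eq by blast
  have "a0 + a1*x + a2*x^2 + a3*x^3 \<noteq> 0" for x
  proof (cases "x = 0")
    case True
    with a0 show ?thesis by simp
  next
    case x: False
    show ?thesis
    \<comment> \<open>for v x \<ge> -N the constant term dominates, otherwise the cubic one\<close>
    proof (cases "- N \<le> v x")
      case True
      have "a0 + a1*x^1 + a2*x^2 + a3*x^3 \<noteq> 0"
        by (intro dominant_term_nonzero val_ge_monomial[OF val_ge_val] x a0(1))
          (use True a0(2) N in \<open>simp_all add: abs_less_iff\<close>)
      then show ?thesis by simp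
    next
      case False
      have "a3*x^3 + a0*x^0 + a1*x^1 + a2*x^2 \<noteq> 0"
        by (intro dominant_term_nonzero val_ge_monomial[OF val_ge_val] x)
          (use False a0(2) a3 x N in \<open>simp_all add: val_mult val_power abs_less_iff\<close>)
      then show ?thesis by (simp add: algebra_simps)
    qed
  qed
  with a0 show ?thesis by blast
qed

lemma exists_lead_coeff_without_roots:
  fixes a0 a1 a2 :: 'a
  assumes "a0 \<noteq> 0"
  shows "\<exists>a3. a3 \<noteq> 0 \<and> (\<forall>x. a0 + a1*x + a2*x^2 + a3*x^3 \<noteq> 0)"
  using exists_const_coeff_without_roots[OF assms, of a2 a1] cubic_no_root_if_reversal_has_none[OF assms]
  by blast

section \<open>Residue classes\<close>

definition residue_rel :: "('a \<times> 'a) set" where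
  "residue_rel = {(x, y). x \<in> val_ring v \<and> y \<in> val_ring v \<and> x - y \<in> max_ideal v}"

definition val_units :: "'a set" where
  "val_units = {x. x \<noteq> 0 \<and> v x = 0}"

lemma residue_classes_eq: "residue_classes v = val_ring v // residue_rel"
  by (simp add: residue_classes_def residue_rel_def)

lemma mem_val_ring_iff: "x \<in> val_ring v \<longleftrightarrow> val_ge 0 x"
  by (auto simp: val_ring_def val_ge_def)

lemma residue_rel_iff: "(x, y) \<in> residue_rel \<longleftrightarrow> val_ge 0 x \<and> val_ge 0 y \<and> val_ge 1 (x - y)"
  by (auto simp: residue_rel_def mem_val_ring_iff max_ideal_def in_max_pow_def val_ge_def)

lemma equiv_residue_rel: "equiv (val_ring v) residue_rel"
proof (rule equivI)
  show "residue_rel \<subseteq> val_ring v \<times> val_ring v" by (auto simp: residue_rel_def)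
  show "refl_on (val_ring v) residue_rel" by (auto simp: refl_on_def residue_rel_iff mem_val_ring_iff)
  show "sym residue_rel" unfolding sym_def residue_rel_iff by (metis val_ge_minus minus_diff_eq)
  show "trans residue_rel" unfolding trans_def residue_rel_iff by (metis val_ge_add diff_add_cancel add_diff_eq)
qed

lemma exists_residue_class_avoiding:
  assumes fin: "finite (residue_classes v)"
    and cong: "\<And>y y'. y \<in> val_units \<Longrightarrow> y' \<in> val_units \<Longrightarrow> (y, y') \<in> residue_rel \<Longrightarrow> (\<phi> y, \<phi> y') \<in> residue_rel"
  shows "\<exists>e \<in> val_ring v. \<forall>y \<in> val_units. (e, \<phi> y) \<notin> residue_rel"
proof -
  define res where "res x = residue_rel `` {x}" for x
  have equiv: "equiv (val_ring v) residue_rel" by (rule equiv_residue_rel)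
  have units: "val_units \<subseteq> val_ring v" by (auto simp: val_units_def mem_val_ring_iff val_ge_def)
  have maps: "\<phi> y \<in> val_ring v" if "y \<in> val_units" for y
  proof -
    have "(y, y) \<in> residue_rel" using that by (auto simp: residue_rel_iff val_units_def val_ge_def)
    then have "(\<phi> y, \<phi> y) \<in> residue_rel" using cong that by blast
    then show ?thesis by (simp add: residue_rel_def)
  qed
  have res_in: "res x \<in> residue_classes v" if "x \<in> val_ring v" for x
    using that by (simp add: res_def residue_classes_eq quotientI)
  have res_eq: "res x = res y \<longleftrightarrow> (x, y) \<in> residue_rel" if "x \<in> val_ring v" "y \<in> val_ring v" for x y
    using eq_equiv_class_iff[OF equiv that] by (simp add: res_def)
  have zero: "0 \<in> val_ring v" by (simp add: val_ring_def)
  have "res 0 \<notin> res ` val_units"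
  proof
    assume "res 0 \<in> res ` val_units"
    then obtain y where "y \<in> val_units" "(0, y) \<in> residue_rel" using res_eq[OF zero] units by auto
    then show False by (simp add: residue_rel_iff val_units_def val_ge_def val_minus)
  qed
  then have "res ` val_units \<subset> residue_classes v" using res_in units zero by blast
  then have "card (res ` val_units) < card (residue_classes v)" by (rule psubset_card_mono[OF fin])
  moreover have "card ((res \<circ> \<phi>) ` val_units) \<le> card (res ` val_units)"
  proof (rule card_image_le_if_factors)
    have "res ` val_units \<subseteq> residue_classes v" using res_in units by blast
    then show "finite (res ` val_units)" using fin by (rule finite_subset)
    show "(res \<circ> \<phi>) y = (res \<circ> \<phi>) y'" if "y \<in> val_units" "y' \<in> val_units" "res y = res y'" for y y'
    proof -
      have "(y, y') \<in> residue_rel" using that res_eq units by blast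
      then have "(\<phi> y, \<phi> y') \<in> residue_rel" using cong that by blast
      then show ?thesis using res_eq maps that by simp
    qed
  qed
  moreover have "(res \<circ> \<phi>) ` val_units \<subseteq> residue_classes v" using res_in maps by auto
  ultimately have "\<not> residue_classes v \<subseteq> (res \<circ> \<phi>) ` val_units"
    using card_mono[OF finite_subset[OF _ fin]] by fastforce
  then obtain C where "C \<in> residue_classes v" "C \<notin> (res \<circ> \<phi>) ` val_units" by blast
  moreover from this(1) obtain e where "C = res e" "e \<in> val_ring v"
    unfolding residue_classes_eq res_def by (rule quotientE)
  ultimately have "(e, \<phi> y) \<notin> residue_rel" if "y \<in> val_units" for y
    using res_eq maps that by force
  with \<open>e \<in> val_ring v\<close> show ?thesis by blast
qed

lemma residue_rel_root_parameter:
  assumes w: "v w = 0" and y: "y \<in> val_units" "y' \<in> val_units" "(y, y') \<in> residue_rel"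
  shows "(- (w*y + inverse (y^2)), - (w*y' + inverse (y'^2))) \<in> residue_rel"
proof -
  have units: "u \<noteq> 0" "val_ge 0 u" "val_ge 0 (inverse (u^2))" if "u \<in> val_units" for u
    using that by (auto simp: val_units_def val_ge_def val_inverse val_power)
  have w0: "val_ge 0 w" using val_ge_val[of w] w by simp
  have in_ring: "val_ge 0 (- (w*u + inverse (u^2)))" if "u \<in> val_units" for u
  proof -
    have "val_ge 0 (w*u + inverse (u^2))"
      using val_ge_add[OF val_ge_mult[OF w0 units(2)[OF that]] units(3)[OF that]] by simp
    then show ?thesis by (simp only: val_ge_minus)
  qed
  have close: "val_ge 1 (y - y')" using y(3) by (simp add: residue_rel_iff)
  have "- (w*y + inverse (y^2)) - - (w*y' + inverse (y'^2))
      = w * (y' - y) + (y - y') * (y + y') * inverse (y^2 * y'^2)"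
    using units(1)[OF y(1)] units(1)[OF y(2)] by (simp add: field_simps power2_eq_square)
  moreover have "val_ge 1 (w * (y' - y))"
    using val_ge_mult[OF w0 val_ge_minus[THEN iffD2, OF close]] by (simp add: minus_diff_eq)
  moreover have "val_ge 1 ((y - y') * (y + y') * inverse (y^2 * y'^2))"
  proof -
    have sum: "val_ge 0 (y + y')" using units(2)[OF y(1)] units(2)[OF y(2)] by (rule val_ge_add)
    have inv: "val_ge 0 (inverse (y^2 * y'^2))"
      using val_ge_mult[OF units(3)[OF y(1)] units(3)[OF y(2)], of 0] by (simp add: inverse_mult_distrib)
    show ?thesis using val_ge_mult[OF val_ge_mult[OF close sum, of 1] inv, of 1] by simp
  qed
  ultimately have "val_ge 1 (- (w*y + inverse (y^2)) - - (w*y' + inverse (y'^2)))"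
    by (simp only: val_ge_add)
  with in_ring y show ?thesis by (simp only: residue_rel_iff)
qed

lemma exists_quadratic_coeff_without_roots_normalized:
  assumes fin: "finite (residue_classes v)" and w: "w \<noteq> 0" "v w = 0"
  shows "\<exists>e. \<forall>y. w*y^3 + e*y^2 + 1 \<noteq> 0"
proof -
  obtain e where e: "e \<in> val_ring v"
    and avoid: "\<And>y. y \<in> val_units \<Longrightarrow> (e, - (w*y + inverse (y^2))) \<notin> residue_rel"
    using exists_residue_class_avoiding[OF fin, of "\<lambda>y. - (w*y + inverse (y^2))"]
      residue_rel_root_parameter[OF w(2)] by blast
  have e0: "val_ge 0 e" using e by (simp add: mem_val_ring_iff)
  have "w*y^3 + e*y^2 + 1 \<noteq> 0" for y
  proof
    assume root: "w*y^3 + e*y^2 + 1 = 0"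
    then have y: "y \<noteq> 0" by auto
    consider "v y < 0" | "0 < v y" | "v y = 0" by linarith
    then show False
    proof cases
      case 1
      have "w*y^3 + e*y^2 + 1*y^0 + 0 \<noteq> 0"
        by (intro dominant_term_nonzero val_ge_monomial[OF e0] val_ge_monomial[OF val_ge_val] y)
          (use 1 w y in \<open>simp_all add: val_mult val_power\<close>)
      with root show False by simp
    next
      case 2
      have "1 + e*y^2 + w*y^3 + 0 \<noteq> 0"
        by (intro dominant_term_nonzero val_ge_monomial[OF e0] val_ge_monomial[OF val_ge_val] y)
          (use 2 w y in simp_all)
      with root show False by (simp add: algebra_simps)
    next
      case 3
      then have "y \<in> val_units" using y by (simp add: val_units_def)
      moreover have "e = - (w*y + inverse (y^2))"
        using root y by (simp add: field_simps power2_eq_square power3_eq_cube)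
          (metis add.commute add_eq_0_iff2 mult.assoc mult.left_commute)
      ultimately show False using avoid e equiv_residue_rel by (metis equiv_class_eq_iff)
    qed
  qed
  then show ?thesis by blast
qed

lemma exists_quadratic_coeff_without_roots:
  fixes a0 a3 :: 'a
  assumes fin: "finite (residue_classes v)" and a0: "a0 \<noteq> 0" and a3: "a3 \<noteq> 0"
  shows "\<exists>a2. \<forall>x. a0 + a2*x^2 + a3*x^3 \<noteq> 0"
proof (cases "3 dvd v a3 - v a0")
  case False
  have "a0 + 0*x^2 + a3*x^3 \<noteq> 0" for x
  proof
    assume "a0 + 0*x^2 + a3*x^3 = 0"
    then have "a3*x^3 = - a0" and "x \<noteq> 0" using a0 by (auto simp: add_eq_0_iff2 add.commute)
    then have "v a3 + 3 * v x = v a0" using a3 by (metis val_minus val_mult val_power of_nat_numeral power_eq_0_iff)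
    with False show False by (metis add_diff_cancel_left' dvd_triv_left minus_diff_eq dvd_minus_iff)
  qed
  then show ?thesis by blast
next
  case True
  then obtain m where m: "v a3 - v a0 = 3 * m" by (auto elim: dvdE)
  obtain t where t: "t \<noteq> 0" "v t = m" using exists_val_eq by blast
  define w where "w = a3 / (a0 * t^3)"
  have w: "w \<noteq> 0" "v w = 0" using a0 a3 t m by (auto simp: w_def val_divide val_mult val_power)
  obtain e where e: "\<And>y. w*y^3 + e*y^2 + 1 \<noteq> 0"
    using exists_quadratic_coeff_without_roots_normalized[OF fin w] by blast
  have "a0 + (e*a0*t^2)*x^2 + a3*x^3 = a0 * (w*(t*x)^3 + e*(t*x)^2 + 1)" for x
    using a0 t by (simp add: w_def field_simps power2_eq_square power3_eq_cube)
  then have "a0 + (e*a0*t^2)*x^2 + a3*x^3 \<noteq> 0" for x using a0 e[of "t*x"] by simp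
  then show ?thesis by blast
qed

section \<open>Nora's strategy for cubics\<close>

lemma nora_wins_final_cubic_move:
  assumes fin: "finite (residue_classes v)"
    and open_j: "open_slots 3 a = {j}" and adm: "admissible 3 (a :: nat \<Rightarrow> 'a option)"
    and slot: "j = 0 \<or> j = 3 \<or> (j = 2 \<and> a 1 = Some 0)"
  shows "wins Nora 3 1 a Nora"
proof -
  define b where "b i = the (a i)" for i
  have filled: "a i = Some (b i)" if "i \<le> 3" "i \<noteq> j" for i
    using filled_slot[of i 3 a] open_j that by (auto simp: b_def)
  have end_nonzero: "b i \<noteq> 0" if "i = 0 \<or> i = 3" "i \<noteq> j" for i
    using filled[of i] adm that by (auto simp: admissible_def)
  have poly_move: "poly (game_poly 3 (a(j := Some c))) x
      = (if j = 0 then c else b 0) + (if j = 1 then c else b 1) * x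
        + (if j = 2 then c else b 2) * x^2 + (if j = 3 then c else b 3) * x^3" for c x
    by (simp add: poly_game_poly_cubic b_def)
  have "\<exists>c. legal_move 3 a j c \<and> (\<forall>x. poly (game_poly 3 (a(j := Some c))) x \<noteq> 0)"
    using slot
  proof (elim disjE conjE)
    assume j: "j = 0"
    obtain c where "c \<noteq> 0" "\<forall>x. c + b 1 * x + b 2 * x^2 + b 3 * x^3 \<noteq> 0"
      using exists_const_coeff_without_roots[of "b 3" "b 1" "b 2"] end_nonzero[of 3] j by auto
    then show ?thesis using open_j by (auto simp: legal_move_iff poly_move[unfolded j] j)
  next
    assume j: "j = 3"
    obtain c where "c \<noteq> 0" "\<forall>x. b 0 + b 1 * x + b 2 * x^2 + c * x^3 \<noteq> 0"
      using exists_lead_coeff_without_roots[of "b 0" "b 1" "b 2"] end_nonzero[of 0] j by auto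
    then show ?thesis using open_j by (auto simp: legal_move_iff poly_move[unfolded j] j)
  next
    assume j: "j = 2" and "a 1 = Some 0"
    then have "b 1 = 0" by (simp add: b_def)
    obtain c where "\<forall>x. b 0 + c * x^2 + b 3 * x^3 \<noteq> 0"
      using exists_quadratic_coeff_without_roots[OF fin, of "b 0" "b 3"] end_nonzero j by auto
    then show ?thesis using open_j \<open>b 1 = 0\<close> by (auto simp: legal_move_iff poly_move[unfolded j] j)
  qed
  then show ?thesis by (auto simp: has_root_def)
qed

lemma nora_wins_cubic_moving_last:
  assumes fin: "finite (residue_classes v)"
  shows "wins Nora 3 (Suc 3) (\<lambda>_. None :: 'a option) Wanda"
proof (rule wins_against_all_moves[OF refl])
  fix i :: nat and c :: 'a
  let ?a1 = "(\<lambda>_. None)(i := Some c)"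
  assume first_move: "legal_move 3 (\<lambda>_. None) i c"
  define k where "k = (if i = 1 then 2 else 1 :: nat)"
  let ?a2 = "?a1(k := Some 0)"
  have reply: "legal_move 3 ?a1 k 0"
    using first_move by (auto simp: legal_move_iff open_slots_def k_def)
  have final: "wins Nora 3 1 (?a2(i' := Some c')) Nora" if last: "legal_move 3 ?a2 i' c'" for i' c'
  proof -
    let ?a3 = "?a2(i' := Some c')"
    have "card (open_slots 3 ?a3) = 1"
      using first_move reply last by (simp add: card_open_slots_move open_slots_empty)
    then obtain j where j: "open_slots 3 ?a3 = {j}" by (rule card_1_singletonE)
    have adm: "admissible 3 ?a3"
      using first_move reply last by (intro admissible_update) (auto simp: admissible_def)
    have "j \<in> open_slots 3 ?a3" using j by simp
    then have "?a3 j = None" "j \<le> 3" by (simp_all add: open_slots_def)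
    then have "j \<noteq> i" "j \<noteq> k" "j \<le> 3" by (auto split: if_splits)
    moreover have "i' \<noteq> k" using last by (auto simp: legal_move_def)
    ultimately have "j \<noteq> 1" and "j = 2 \<Longrightarrow> ?a3 1 = Some 0" by (auto simp: k_def split: if_splits)
    with \<open>j \<le> 3\<close> have "j = 0 \<or> j = 3 \<or> (j = 2 \<and> ?a3 1 = Some 0)" by fastforce
    then show ?thesis by (rule nora_wins_final_cubic_move[OF fin j adm])
  qed
  have replied: "wins Nora 3 2 ?a2 (other Nora)"
    by (rule wins_against_all_moves[of 2 1]) (use final in simp_all)
  have "wins Nora 3 3 ?a1 Nora" by (rule wins_by_move[OF _ reply replied]) simp
  then show "wins Nora 3 3 ?a1 (other Wanda)" by simp
qed simp

end

theorem proposition2: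
  fixes v :: "'a::field \<Rightarrow> int" and first :: player
  assumes "nonarch_local_field v"
  shows "has_winning_strategy TYPE('a) 3 first (last_mover 3 first)"
proof -
  interpret discretely_valued_field v
    using assms by unfold_locales (simp add: nonarch_local_field_def)
  have fin: "finite (residue_classes v)" using assms by (simp add: nonarch_local_field_def)
  show ?thesis
  proof (cases first)
    case Nora
    then have "last_mover 3 first = Wanda" by (simp add: last_mover_def)
    have "wins Wanda 3 1 a Wanda" if "open_slots 3 a = {j}" "admissible 3 a" for a :: "nat \<Rightarrow> 'a option" and j
      using wanda_wins_final_move[OF infinite_UNIV_field _ that] by simp
    then have "has_winning_strategy TYPE('a) 3 first Wanda"
      using \<open>last_mover 3 first = Wanda\<close> by (rule last_mover_has_winning_strategy)
    with \<open>last_mover 3 first = Wanda\<close> show ?thesis by simp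
  next
    case Wanda
    then show ?thesis
      using nora_wins_cubic_moving_last[OF fin] by (simp add: has_winning_strategy_def last_mover_def)
  qed
qed

end
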